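(* Let $\mathcal G$ be a $1$-step solvable $\mathrm{MD}_{n-2}(n)$-algebra with $n\geq 6$ and $\dim\mathcal G^1\geq 3$. Then $n=6$ and $\dim\mathcal G^1=4$.
   Context: All Lie algebras are finite-dimensional over $\mathbb R$; $\mathcal G^1=[\mathcal G,\mathcal G]$. $\mathcal G$ is $1$-step solvable if $\mathcal G^1$ is commutative and nonzero. For the connected simply connected Lie group of $\mathcal G$, the coadjoint orbit of $F\in\mathcal G^*$ has dimension $\operatorname{rank}\bigl(F([x_i,x_j])\bigr)_{n\times n}$ for any basis $\{x_i\}$; it is non-trivial iff $F|_{\mathcal G^1}\neq0$. An $\mathrm{MD}_k(n)$-algebra is an $n$-dimensional real solvable Lie algebra all of whose non-trivial coadjoint orbits have dimension $k$, i.e. $\operatorname{rank}\bigl(F([x_i,x_j])\bigr)=k$ whenever $F|_{\mathcal G^1}\neq 0$. *)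

theory Defs
  imports "HOL-Analysis.Analysis"
begin

text \<open>A finite-dimensional real Lie algebra of dimension n is modelled as the
  space real^'n (n = CARD('n)) equipped with a bracket br.\<close>

definition lie_algebra :: "(real^'n \<Rightarrow> real^'n \<Rightarrow> real^'n) \<Rightarrow> bool" where
  "lie_algebra br \<longleftrightarrow> bilinear br \<and> (\<forall>x. br x x = 0) \<and>
     (\<forall>x y z. br x (br y z) + br y (br z x) + br z (br x y) = 0)"

definition derived :: "(real^'n \<Rightarrow> real^'n \<Rightarrow> real^'n) \<Rightarrow> (real^'n) set \<Rightarrow> (real^'n) set" where
  "derived br S = span {br x y | x y. x \<in> S \<and> y \<in> S}"

definition solvable_lie :: "(real^'n \<Rightarrow> real^'n \<Rightarrow> real^'n) \<Rightarrow> bool" where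
  "solvable_lie br \<longleftrightarrow> lie_algebra br \<and> (\<exists>m. (derived br ^^ m) UNIV = {0})"

definition one_step_solvable :: "(real^'n \<Rightarrow> real^'n \<Rightarrow> real^'n) \<Rightarrow> bool" where
  "one_step_solvable br \<longleftrightarrow> lie_algebra br \<and> derived br UNIV \<noteq> {0} \<and>
     (\<forall>x\<in>derived br UNIV. \<forall>y\<in>derived br UNIV. br x y = 0)"

text \<open>Dimension of the coadjoint orbit of F: rank of (F([x_i,x_j])) in the standard basis.\<close>
definition coadj_orbit_dim :: "(real^'n \<Rightarrow> real^'n \<Rightarrow> real^'n) \<Rightarrow> (real^'n \<Rightarrow> real) \<Rightarrow> nat" where
  "coadj_orbit_dim br F = rank (\<chi> i j. F (br (axis i 1) (axis j 1)))"

text \<open>MD_k(n)-algebra (n = CARD('n)): solvable, and every non-trivial coadjoint orbit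
  (F linear with F restricted to G^1 nonzero) has dimension k.\<close>
definition MD_algebra :: "nat \<Rightarrow> (real^'n \<Rightarrow> real^'n \<Rightarrow> real^'n) \<Rightarrow> bool" where
  "MD_algebra k br \<longleftrightarrow> solvable_lie br \<and>
     (\<forall>F. linear F \<and> (\<exists>x\<in>derived br UNIV. F x \<noteq> 0) \<longrightarrow> coadj_orbit_dim br F = k)"

end

theory Submission
  imports Defs "HOL-Computational_Algebra.Fundamental_Theorem_Algebra"
begin

(*
  Let A = G^1, an abelian ideal, and identify functionals on A with vectors w in A via the
  inner product. By the MD hypothesis the coadjoint stabilizer {x. <w, [y, x]> = 0 for all y}
  is 2-dimensional for every w ~= 0 in A. The transposes of ad x restricted to A commute, so
  they have a common eigenvector or a common invariant plane on which they act as
  rotation-dilations. By the Jacobi identity the kernel P of x |-> (ad x)^T w is isotropic for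
  the form <w, [., .]>, whence 2 dim P <= n + 2, while dim P >= n - 1 for an eigenvector and
  dim P >= n - 2 in the rotation case. So there is no common eigenvector, n <= 6, and
  dim A <= 4 because the part of A orthogonal to the plane lies in the stabilizer. Finally
  dim A = 3 is impossible, since a commuting family on a 3-dimensional space always has a
  common eigenvector.
*)

lemma dim_kernel_add_dim_image:
  fixes f :: "'a::euclidean_space \<Rightarrow> 'b::euclidean_space"
  assumes f: "linear f" and S: "subspace S"
  shows "dim {x\<in>S. f x = 0} + dim (f ` S) = dim S"
proof -
  let ?K = "{x\<in>S. f x = 0}"
  let ?C = "{y\<in>S. \<forall>x\<in>?K. orthogonal x y}"
  have K: "subspace ?K"
    using S f by (auto simp: subspace_def linear_add linear_scale linear_0)
  have C: "subspace ?C"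
    using S by (auto simp: subspace_def orthogonal_clauses)
  have dim_C: "dim ?C + dim ?K = dim S"
    by (rule dim_subspace_orthogonal_to_vectors[OF K S]) auto
  have "inj_on f (span ?C)"
  proof (rule inj_onI)
    fix x y assume "x \<in> span ?C" "y \<in> span ?C" and fxy: "f x = f y"
    then have "x - y \<in> ?C" using C span_eq_iff by (metis (no_types, lifting) subspace_diff)
    moreover have "f (x - y) = 0" using fxy f by (simp add: linear_diff)
    ultimately have "orthogonal (x - y) (x - y)" by auto
    then show "x = y" by (simp only: orthogonal_self) simp
  qed
  then have "dim (f ` ?C) = dim ?C" by (rule dim_image_eq[OF f])
  moreover have "f ` S = f ` ?C"
  proof
    show "f ` S \<subseteq> f ` ?C"
    proof
      fix z assume "z \<in> f ` S"
      then obtain x where x: "x \<in> S" "z = f x" by auto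
      obtain y w where y: "y \<in> span ?K" and w: "\<And>v. v \<in> span ?K \<Longrightarrow> orthogonal w v"
        and xyw: "x = y + w"
        using orthogonal_subspace_decomp_exists[of ?K x] by blast
      have yK: "y \<in> ?K" using y by (simp only: span_eq_iff[THEN iffD2, OF K])
      have "w = x - y" using xyw by simp
      then have "w \<in> S" using subspace_diff[OF S x(1)] yK by simp
      moreover have "\<forall>v\<in>?K. orthogonal v w" using w by (simp add: orthogonal_commute span_base)
      moreover have "f x = f w" using yK f by (simp add: xyw linear_add)
      ultimately show "z \<in> f ` ?C" using x by blast
    qed
  qed auto
  ultimately show ?thesis using dim_C by simp
qed

section \<open>Polynomials in a linear operator\<close>

definition poly_op :: "real poly \<Rightarrow> ('a::real_vector \<Rightarrow> 'a) \<Rightarrow> 'a \<Rightarrow> 'a" where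
  "poly_op p S = fold_coeffs (\<lambda>a g v. a *\<^sub>R v + S (g v)) p (\<lambda>v. 0)"

lemma poly_op_0 [simp]: "poly_op 0 S v = 0"
  by (simp add: poly_op_def)

lemma poly_op_pCons [simp]:
  assumes "linear S"
  shows "poly_op (pCons a p) S v = a *\<^sub>R v + S (poly_op p S v)"
  using linear_0[OF assms] by (cases "a = 0 \<and> p = 0") (auto simp: poly_op_def)

context
  fixes S :: "'a::real_vector \<Rightarrow> 'a"
  assumes S: "linear S"
begin

lemma poly_op_add: "poly_op (p + q) S v = poly_op p S v + poly_op q S v"
  by (induction p q rule: poly_induct2) (simp_all add: S linear_add algebra_simps)

lemma poly_op_smult: "poly_op (smult c p) S v = c *\<^sub>R poly_op p S v"
  by (induction p) (simp_all add: S linear_add linear_scale algebra_simps)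

lemma poly_op_mult: "poly_op (p * q) S v = poly_op p S (poly_op q S v)"
  by (induction p) (simp_all add: S poly_op_add poly_op_smult)

lemma poly_op_monom: "poly_op (monom a k) S v = a *\<^sub>R (S ^^ k) v"
  by (induction k) (simp_all add: S monom_0 monom_Suc linear_0 linear_scale)

lemma poly_op_sum: "poly_op (\<Sum>k\<in>I. p k) S v = (\<Sum>k\<in>I. poly_op (p k) S v)"
  by (induction I rule: infinite_finite_induct) (simp_all add: poly_op_add)

lemma poly_op_linear_factor: "poly_op [:a, 1:] S x = S x + a *\<^sub>R x"
  by (simp add: S linear_0)

lemma poly_op_quadratic_factor: "poly_op [:c, b, 1:] S x = S (S x) + b *\<^sub>R S x + c *\<^sub>R x"
  by (simp add: S linear_0 linear_add linear_scale algebra_simps)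

lemma linear_poly_op: "linear (poly_op p S)"
proof (rule linearI)
  show "poly_op p S (x + y) = poly_op p S x + poly_op p S y" for x y
    by (induction p) (simp_all add: S linear_add algebra_simps)
  show "poly_op p S (c *\<^sub>R x) = c *\<^sub>R poly_op p S x" for c x
    by (induction p) (simp_all add: S linear_scale algebra_simps)
qed

lemma poly_op_in_subspace:
  assumes "subspace U" "S ` U \<subseteq> U" "v \<in> U"
  shows "poly_op p S v \<in> U"
  by (induction p) (use assms in \<open>auto simp: S subspace_0 subspace_add subspace_scale\<close>)

lemma poly_op_commute:
  assumes T: "linear T" and U: "subspace U" "S ` U \<subseteq> U"
    and comm: "\<And>x. x \<in> U \<Longrightarrow> T (S x) = S (T x)" and v: "v \<in> U"
  shows "T (poly_op p S v) = poly_op p S (T v)"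
proof (induction p)
  case (pCons a p)
  have "poly_op p S v \<in> U" using poly_op_in_subspace U v .
  with pCons show ?case by (simp add: S T comm linear_add linear_scale)
qed (simp add: T linear_0)

end

definition linear_or_irreducible_quadratic :: "real poly \<Rightarrow> bool" where
  "linear_or_irreducible_quadratic d \<longleftrightarrow>
     (\<exists>x. d = [:-x, 1:]) \<or> (\<exists>b c. b^2 < 4*c \<and> d = [:c, b, 1:])"

lemma poly_map_poly_of_real:
  "poly (map_poly complex_of_real p) (complex_of_real x) = complex_of_real (poly p x)"
  by (induction p) (simp_all add: map_poly_pCons)

lemma map_poly_of_real_add:
  "map_poly of_real (p + q) = map_poly of_real p + (map_poly of_real q :: complex poly)"
  by (intro poly_eqI) (simp add: coeff_map_poly)

lemma map_poly_of_real_mult: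
  "map_poly of_real (p * q) = map_poly of_real p * (map_poly of_real q :: complex poly)"
proof (induction p)
  case (pCons a p)
  have "map_poly of_real (smult a q) = smult (of_real a) (map_poly of_real q :: complex poly)"
    by (intro poly_eqI) (simp add: coeff_map_poly)
  with pCons show ?case by (simp add: map_poly_of_real_add map_poly_pCons)
qed simp

lemma real_poly_has_linear_or_quadratic_factor:
  fixes q :: "real poly"
  assumes "degree q > 0"
  shows "\<exists>d r. linear_or_irreducible_quadratic d \<and> q = d * r"
proof -
  let ?cq = "map_poly complex_of_real q"
  have "degree ?cq = degree q" by (simp add: degree_map_poly)
  then have "\<not> constant (poly ?cq)" using assms constant_degree[of ?cq] by simp
  then obtain z where z: "poly ?cq z = 0" using fundamental_theorem_of_algebra by blast
  show ?thesis
  proof (cases "Im z = 0")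
    case True
    then have "poly q (Re z) = 0"
      using z poly_map_poly_of_real[of q "Re z"] by (simp add: complex_is_Real_iff)
    then obtain r where "q = [:- Re z, 1:] * r" using poly_eq_0_iff_dvd by (metis dvdE)
    then show ?thesis unfolding linear_or_irreducible_quadratic_def by blast
  next
    case False
    define d where "d = [:Re z ^ 2 + Im z ^ 2, -2 * Re z, 1:]"
    define t where "t = q mod d"
    have "d \<noteq> 0" "degree d = 2" by (simp_all add: d_def)
    then have "degree t \<le> 1" using degree_mod_less[of d q] unfolding t_def by auto
    then have t: "t = [:coeff t 0, coeff t 1:]"
      by (intro poly_eqI) (auto simp: coeff_pCons coeff_eq_0 split: nat.split)
    \<comment> \<open>z is a root of q and of d, hence of the real remainder t of degree at most 1\<close>
    have "poly (map_poly complex_of_real d) z = 0"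
      by (simp add: d_def map_poly_pCons complex_eq_iff power2_eq_square algebra_simps)
    moreover have "q = (q div d) * d + t" by (simp add: t_def)
    then have "map_poly complex_of_real q
        = map_poly complex_of_real (q div d) * map_poly complex_of_real d + map_poly complex_of_real t"
      by (metis map_poly_of_real_add map_poly_of_real_mult)
    ultimately have "poly (map_poly complex_of_real t) z = 0" using z by (simp del: map_poly_map_poly)
    then have "complex_of_real (coeff t 0) + z * complex_of_real (coeff t 1) = 0"
      by (subst (asm) t) (simp add: map_poly_pCons)
    then have "coeff t 1 = 0" "coeff t 0 = 0" using False by (auto simp: complex_eq_iff)
    then have "q = d * (q div d)" using \<open>q = (q div d) * d + t\<close> t by (simp add: mult.commute)
    moreover have "0 < Im z ^ 2" using False by simp
    then have "(-2 * Re z)^2 < 4 * (Re z ^ 2 + Im z ^ 2)" by (simp add: power2_eq_square)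
    ultimately show ?thesis unfolding linear_or_irreducible_quadratic_def d_def by blast
  qed
qed

lemma nontrivial_relation_of_family:
  fixes f :: "nat \<Rightarrow> 'a::euclidean_space"
  assumes f: "\<And>k. k \<le> d \<Longrightarrow> f k \<in> U" and dim: "dim U \<le> d"
  shows "\<exists>c. (\<exists>k\<le>d. c k \<noteq> 0) \<and> (\<Sum>k\<le>d. c k *\<^sub>R f k) = 0"
proof (cases "inj_on f {..d}")
  case True
  have "\<not> independent (f ` {..d})"
  proof
    assume "independent (f ` {..d})"
    then have "card (f ` {..d}) \<le> dim U" using f by (auto intro: independent_card_le_dim)
    then show False using dim card_image[OF True] by simp
  qed
  then obtain u where u: "\<exists>v\<in>f ` {..d}. u v \<noteq> 0" "(\<Sum>v\<in>f ` {..d}. u v *\<^sub>R v) = 0"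
    using dependent_finite[of "f ` {..d}"] by auto
  then show ?thesis
    by (intro exI[of _ "\<lambda>k. u (f k)"]) (auto simp: sum.reindex[OF True])
next
  case False
  then obtain i j where ij: "i \<le> d" "j \<le> d" "i \<noteq> j" "f i = f j"
    unfolding inj_on_def by auto
  define c :: "nat \<Rightarrow> real" where "c k = (if k = i then 1 else if k = j then -1 else 0)" for k
  have "(\<Sum>k\<le>d. c k *\<^sub>R f k) = (\<Sum>k\<le>d. (if k = i then f i else 0) - (if k = j then f j else 0))"
    by (rule sum.cong) (auto simp: c_def ij(3))
  also have "\<dots> = 0" using ij by (simp add: sum_subtractf)
  finally show ?thesis using ij(1) by (intro exI[of _ c]) (auto simp: c_def)
qed

lemma exists_annihilating_poly:
  fixes S :: "'a::euclidean_space \<Rightarrow> 'a"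
  assumes S: "linear S" and U: "S ` U \<subseteq> U" and v: "v \<in> U"
  shows "\<exists>q. q \<noteq> 0 \<and> poly_op q S v = 0"
proof -
  have "(S ^^ k) v \<in> U" for k
    by (induction k) (use v U in auto)
  then obtain c where c: "\<exists>k\<le>dim U. c k \<noteq> 0" "(\<Sum>k\<le>dim U. c k *\<^sub>R (S ^^ k) v) = 0"
    using nontrivial_relation_of_family[of "dim U" "\<lambda>k. (S ^^ k) v" U] by auto
  define q where "q = (\<Sum>k\<le>dim U. monom (c k) k)"
  have "poly_op q S v = 0"
    using c(2) by (simp add: q_def poly_op_sum poly_op_monom S)
  moreover obtain k where "k \<le> dim U" "c k \<noteq> 0" using c(1) by blast
  then have "coeff q k \<noteq> 0" by (simp add: q_def coeff_sum coeff_monom)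
  ultimately show ?thesis by (metis coeff_0)
qed

lemma factor_annihilates_nonzero_vector:
  fixes S :: "'a::euclidean_space \<Rightarrow> 'a"
  assumes S: "linear S" and U: "subspace U" "S ` U \<subseteq> U"
  shows "q \<noteq> 0 \<Longrightarrow> v \<in> U \<Longrightarrow> v \<noteq> 0 \<Longrightarrow> poly_op q S v = 0 \<Longrightarrow>
    \<exists>w\<in>U. w \<noteq> 0 \<and> (\<exists>d. linear_or_irreducible_quadratic d \<and> poly_op d S w = 0)"
proof (induction "degree q" arbitrary: q v rule: less_induct)
  case less
  show ?case
  proof (cases "degree q = 0")
    case True
    then obtain a where "q = [:a:]" "a \<noteq> 0" using less.prems(1) by (metis degree_eq_zeroE pCons_0_0)
    then show ?thesis using less.prems(3,4) S by (simp add: linear_0)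
  next
    case False
    then obtain d r where d: "linear_or_irreducible_quadratic d" and qdr: "q = d * r"
      using real_poly_has_linear_or_quadratic_factor by blast
    have "d \<noteq> 0" "degree d \<ge> 1" using d by (auto simp: linear_or_irreducible_quadratic_def)
    moreover have "r \<noteq> 0" using qdr less.prems(1) by auto
    ultimately have deg: "degree r < degree q" using qdr degree_mult_eq by fastforce
    define w where "w = poly_op r S v"
    have "w \<in> U" unfolding w_def using poly_op_in_subspace[OF S U less.prems(2)] .
    moreover have "poly_op d S w = 0" using less.prems(4) by (simp add: qdr w_def poly_op_mult S)
    ultimately show ?thesis
      using less.hyps[OF deg \<open>r \<noteq> 0\<close> less.prems(2,3)] d unfolding w_def by blast
  qed
qed

lemma exists_vector_annihilated_by_factor:
  fixes S :: "'a::euclidean_space \<Rightarrow> 'a"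
  assumes S: "linear S" and U: "subspace U" "S ` U \<subseteq> U" "U \<noteq> {0}"
  shows "\<exists>w\<in>U. w \<noteq> 0 \<and> (\<exists>d. linear_or_irreducible_quadratic d \<and> poly_op d S w = 0)"
proof -
  obtain v where v: "v \<in> U" "v \<noteq> 0" using U subspace_0 by blast
  then obtain q where "q \<noteq> 0" "poly_op q S v = 0" using exists_annihilating_poly S U by blast
  then show ?thesis using factor_annihilates_nonzero_vector[OF S U(1,2)] v by blast
qed

section \<open>Complex structures\<close>

definition independent_pair :: "'a::real_vector \<Rightarrow> 'a \<Rightarrow> bool" where
  "independent_pair u v \<longleftrightarrow> (\<forall>a b. a *\<^sub>R u + b *\<^sub>R v = 0 \<longrightarrow> a = 0 \<and> b = 0)"

lemma independent_pair_nonzero: "independent_pair u v \<Longrightarrow> u \<noteq> 0"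
  using independent_pair_def[of u v] by force

lemma independent_pair_imp_dim_ge_2:
  fixes u v :: "'a::euclidean_space"
  assumes uv: "independent_pair u v" and "u \<in> W" "v \<in> W"
  shows "2 \<le> dim W"
proof -
  note uv' = uv[unfolded independent_pair_def, rule_format]
  have "v \<noteq> 0" "u \<noteq> v" using uv'[of 0 1] uv'[of 1 "-1"] by auto
  moreover have "u \<notin> span {v}"
  proof
    assume "u \<in> span {v}"
    then obtain k where "u = k *\<^sub>R v" by (auto simp: span_singleton)
    then show False using uv'[of 1 "-k"] by simp
  qed
  ultimately have "independent {u, v}" by (simp add: independent_insertI)
  then have "card {u, v} \<le> dim W" using assms by (intro independent_card_le_dim) auto
  with \<open>u \<noteq> v\<close> show ?thesis by simp
qed

lemma dim_span_pair_le_2: "dim (span {u, v}) \<le> 2"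
  by (rule order_trans[OF dim_le_card[of _ "{u, v}"]]) (auto simp: card_insert_if)

lemma independent_pair_complex_structure:
  assumes J: "linear J" and JJ: "J (J u) = - u" and u: "u \<noteq> 0"
  shows "independent_pair u (J u)"
  unfolding independent_pair_def
proof (intro allI impI)
  fix a b assume ab: "a *\<^sub>R u + b *\<^sub>R J u = 0"
  have "J (a *\<^sub>R u + b *\<^sub>R J u) = 0" using ab J by (simp add: linear_0)
  then have Jab: "a *\<^sub>R J u - b *\<^sub>R u = 0" using J JJ by (simp add: linear_add linear_scale)
  have "(a*a + b*b) *\<^sub>R u = a *\<^sub>R (a *\<^sub>R u + b *\<^sub>R J u) - b *\<^sub>R (a *\<^sub>R J u - b *\<^sub>R u)"
    by (simp add: algebra_simps)
  then have "(a*a + b*b) *\<^sub>R u = 0" using ab Jab by simp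
  then show "a = 0 \<and> b = 0" using u by (auto simp: add_nonneg_eq_0_iff)
qed

lemma complex_structure_dim_ge_2:
  fixes J :: "'a::euclidean_space \<Rightarrow> 'a"
  assumes "linear J" "J (J x) = - x" "x \<noteq> 0" "x \<in> W" "J x \<in> W"
  shows "2 \<le> dim W"
  using independent_pair_imp_dim_ge_2 independent_pair_complex_structure assms by blast

lemma complex_structure_span_invariant:
  assumes J: "linear J" and JJ: "J (J u) = - u"
  shows "J ` span {u, J u} \<subseteq> span {u, J u}"
proof -
  have "J ` {u, J u} \<subseteq> span {u, J u}" using JJ by (auto simp: span_base span_neg)
  then show ?thesis by (simp add: span_linear_image[OF J, symmetric] span_minimal)
qed

lemma no_complex_structure_in_dim_3:
  fixes J :: "'a::euclidean_space \<Rightarrow> 'a"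
  assumes A: "subspace A" and J: "linear J" "J ` A \<subseteq> A" and JJ: "\<And>x. x \<in> A \<Longrightarrow> J (J x) = - x"
  shows "dim A \<noteq> 3"
proof
  assume dimA: "dim A = 3"
  have plane: "span {x, J x} \<subseteq> A" "2 \<le> dim (span {x, J x})" "dim (span {x, J x}) \<le> 2"
    if "x \<in> A" "x \<noteq> 0" for x
    using that J JJ A span_minimal[of "{x, J x}" A] dim_span_pair_le_2
    by (auto intro!: complex_structure_dim_ge_2[of J x] simp: span_base)
  obtain u where u: "u \<in> A" "u \<noteq> 0" using dimA dim_eq_0[of A] by auto
  define W where "W = span {u, J u}"
  obtain u' where u': "u' \<in> A" "u' \<notin> W"
    using dim_subset[of A W] plane(3)[OF u] dimA unfolding W_def by auto
  then have "u' \<noteq> 0" unfolding W_def using span_zero by blast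
  define W' where "W' = span {u', J u'}"
  \<comment> \<open>otherwise W \<inter> W' is a J-invariant plane, hence equal to W'\<close>
  have "W \<inter> W' = {0}"
  proof (rule ccontr)
    assume "W \<inter> W' \<noteq> {0}"
    then obtain x where x: "x \<in> W \<inter> W'" "x \<noteq> 0" by (auto simp: W_def W'_def span_zero)
    have "J x \<in> W \<inter> W'"
      using x complex_structure_span_invariant[OF J(1) JJ] u(1) u'(1) unfolding W_def W'_def by blast
    moreover have "x \<in> A" using x plane(1)[OF u] unfolding W_def by blast
    ultimately have "2 \<le> dim (W \<inter> W')" using complex_structure_dim_ge_2[OF J(1) JJ] x by blast
    then have "W \<inter> W' = W'"
      using plane(3)[OF u'(1) \<open>u' \<noteq> 0\<close>]
      by (intro subspace_dim_equal) (auto simp: W_def W'_def subspace_inter subspace_span)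
    then show False using u' span_base[of u' "{u', J u'}"] unfolding W'_def by blast
  qed
  then have "dim {x + y |x y. x \<in> W \<and> y \<in> W'} = dim W + dim W'"
    using dim_sums_Int[of W W'] by (simp add: W_def W'_def)
  moreover have "dim {x + y |x y. x \<in> W \<and> y \<in> W'} \<le> dim A"
    using plane(1)[OF u] plane(1)[OF u'(1) \<open>u' \<noteq> 0\<close>] A unfolding W_def W'_def
    by (intro dim_subset) (auto intro: subspace_add)
  ultimately show False
    using plane(2)[OF u] plane(2)[OF u'(1) \<open>u' \<noteq> 0\<close>] dimA unfolding W_def W'_def by linarith
qed

definition complex_structure_of :: "('a::real_vector \<Rightarrow> 'a) \<Rightarrow> real \<Rightarrow> real \<Rightarrow> 'a \<Rightarrow> 'a" where
  "complex_structure_of S b c x = (1 / sqrt (c - b^2/4)) *\<^sub>R (S x + (b/2) *\<^sub>R x)"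

lemma linear_complex_structure_of: "linear S \<Longrightarrow> linear (complex_structure_of S b c)"
  unfolding complex_structure_of_def
  by (intro linearI) (simp_all add: linear_add linear_scale algebra_simps)

lemma complex_structure_of_square:
  assumes S: "linear S" and bc: "b^2 < 4*c" and x: "poly_op [:c, b, 1:] S x = 0"
  shows "complex_structure_of S b c (complex_structure_of S b c x) = - x"
proof -
  define t where "t = 1 / sqrt (c - b^2/4)"
  have t2: "t * t * (c - b^2/4) = 1" using bc by (simp add: t_def)
  have SSx: "S (S x) + b *\<^sub>R S x = - c *\<^sub>R x"
    using x by (simp add: poly_op_quadratic_factor[OF S] eq_neg_iff_add_eq_0 algebra_simps)
  have J: "complex_structure_of S b c y = t *\<^sub>R (S y + (b/2) *\<^sub>R y)" for y
    by (simp add: complex_structure_of_def t_def)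
  have "complex_structure_of S b c (complex_structure_of S b c x)
      = (t * t) *\<^sub>R (S (S x) + b *\<^sub>R S x) + (t * t * b^2/4) *\<^sub>R x"
    using S by (simp add: J linear_add linear_scale algebra_simps power2_eq_square
        flip: scaleR_add_left)
  also have "\<dots> = - ((t * t * (c - b^2/4)) *\<^sub>R x)" by (simp add: SSx algebra_simps)
  finally show ?thesis by (simp add: t2)
qed

lemma op_eq_complex_structure_of:
  assumes "b^2 < 4*c"
  shows "S x = sqrt (c - b^2/4) *\<^sub>R complex_structure_of S b c x - (b/2) *\<^sub>R x"
  using assms by (simp add: complex_structure_of_def)

section \<open>Commuting families of operators\<close>

locale commuting_family =
  fixes S :: "'i \<Rightarrow> 'a::euclidean_space \<Rightarrow> 'a" and A :: "'a set"
  assumes subspace_A: "subspace A" and linear_S: "\<And>i. linear (S i)"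
    and S_A: "\<And>i. S i ` A \<subseteq> A"
    and S_commute: "\<And>i j x. x \<in> A \<Longrightarrow> S i (S j x) = S j (S i x)"
begin

definition invariant :: "'a set \<Rightarrow> bool" where
  "invariant U \<longleftrightarrow> subspace U \<and> U \<subseteq> A \<and> (\<forall>i. S i ` U \<subseteq> U)"

definition minimal_invariant :: "'a set \<Rightarrow> bool" where
  "minimal_invariant U \<longleftrightarrow> invariant U \<and> U \<noteq> {0} \<and>
     (\<forall>V. invariant V \<longrightarrow> V \<noteq> {0} \<longrightarrow> V \<subseteq> U \<longrightarrow> V = U)"

lemma minimal_invariant_exists:
  assumes "A \<noteq> {0}"
  shows "\<exists>U. minimal_invariant U"
proof -
  have "invariant A \<and> A \<noteq> {0}" using assms subspace_A S_A by (auto simp: invariant_def)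
  then obtain U where "invariant U \<and> U \<noteq> {0}"
    and "\<And>V. invariant V \<and> V \<noteq> {0} \<Longrightarrow> dim U \<le> dim V"
    using ex_has_least_nat[of "\<lambda>U. invariant U \<and> U \<noteq> {0}" A dim] by blast
  then have "minimal_invariant U"
    unfolding minimal_invariant_def using subspace_dim_equal by (auto simp: invariant_def)
  then show ?thesis ..
qed

lemma invariant_kernel:
  assumes U: "invariant U" and K: "linear K"
    and K_commute: "\<And>i x. x \<in> U \<Longrightarrow> K (S i x) = S i (K x)"
  shows "invariant {x\<in>U. K x = 0}"
  unfolding invariant_def
proof (intro conjI allI)
  show "subspace {x\<in>U. K x = 0}"
    using U K by (auto simp: invariant_def subspace_def linear_add linear_scale linear_0)
  show "{x\<in>U. K x = 0} \<subseteq> A" using U by (auto simp: invariant_def)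
  show "S i ` {x\<in>U. K x = 0} \<subseteq> {x\<in>U. K x = 0}" for i
    using U K_commute linear_0[OF linear_S[of i]] by (auto simp: invariant_def image_subset_iff)
qed

lemma minimal_invariant_kernel:
  assumes U: "minimal_invariant U" and K: "linear K"
    and K_commute: "\<And>i x. x \<in> U \<Longrightarrow> K (S i x) = S i (K x)"
    and w: "w \<in> U" "w \<noteq> 0" "K w = 0"
  shows "\<forall>x\<in>U. K x = 0"
proof -
  have "invariant {x\<in>U. K x = 0}"
    using U K K_commute invariant_kernel by (simp add: minimal_invariant_def)
  moreover have "{x\<in>U. K x = 0} \<noteq> {0}" using w by auto
  ultimately have "{x\<in>U. K x = 0} = U" using U unfolding minimal_invariant_def by blast
  then show ?thesis by blast
qed

lemma minimal_invariant_scalar_or_quadratic: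
  assumes U: "minimal_invariant U"
  shows "(\<exists>z. \<forall>x\<in>U. S i x = z *\<^sub>R x) \<or>
    (\<exists>b c. b^2 < 4*c \<and> (\<forall>x\<in>U. poly_op [:c, b, 1:] (S i) x = 0))"
proof -
  have sU: "subspace U" and UA: "U \<subseteq> A" and SU: "\<And>j. S j ` U \<subseteq> U" and "U \<noteq> {0}"
    using U by (auto simp: minimal_invariant_def invariant_def)
  then obtain w d where w: "w \<in> U" "w \<noteq> 0" and d: "linear_or_irreducible_quadratic d"
    and dw: "poly_op d (S i) w = 0"
    using exists_vector_annihilated_by_factor[OF linear_S sU SU] by blast
  have "\<forall>x\<in>U. poly_op d (S i) x = 0"
  proof (rule minimal_invariant_kernel[OF U linear_poly_op[OF linear_S] _ w dw])
    show "poly_op d (S i) (S j x) = S j (poly_op d (S i) x)" if "x \<in> U" for j x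
      using S_commute UA that by (intro poly_op_commute[OF linear_S linear_S sU SU, symmetric]) auto
  qed
  then show ?thesis
    using d unfolding linear_or_irreducible_quadratic_def
  proof (elim disjE exE conjE)
    fix z assume "\<forall>x\<in>U. poly_op d (S i) x = 0" "d = [:-z, 1:]"
    then have "\<forall>x\<in>U. S i x = z *\<^sub>R x"
      by (simp add: poly_op_linear_factor[OF linear_S] algebra_simps)
    then show ?thesis by blast
  qed blast
qed

definition complex_structure_on :: "'a set \<Rightarrow> ('a \<Rightarrow> 'a) \<Rightarrow> bool" where
  "complex_structure_on U J \<longleftrightarrow> linear J \<and> J ` U \<subseteq> U \<and> (\<forall>x\<in>U. J (J x) = - x) \<and>
     (\<forall>x\<in>U. \<forall>j. J (S j x) = S j (J x))"

definition common_eigenvector :: "'a \<Rightarrow> bool" where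
  "common_eigenvector w \<longleftrightarrow> w \<in> A \<and> w \<noteq> 0 \<and> (\<forall>i. \<exists>l. S i w = l *\<^sub>R w)"

definition rotation_pair :: "'a \<Rightarrow> 'a \<Rightarrow> bool" where
  "rotation_pair u v \<longleftrightarrow> u \<in> A \<and> v \<in> A \<and> independent_pair u v \<and>
     (\<forall>i. \<exists>\<alpha> \<beta>. S i u = \<alpha> *\<^sub>R u + \<beta> *\<^sub>R v \<and> S i v = \<alpha> *\<^sub>R v - \<beta> *\<^sub>R u)"

lemma complex_structure_on_complex_structure_of:
  assumes U: "invariant U" and bc: "b^2 < 4*c"
    and q: "\<And>x. x \<in> U \<Longrightarrow> poly_op [:c, b, 1:] (S i) x = 0"
  shows "complex_structure_on U (complex_structure_of (S i) b c)"
proof -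
  have "subspace U" "U \<subseteq> A" "\<And>j. S j ` U \<subseteq> U" using U by (auto simp: invariant_def)
  then show ?thesis
    unfolding complex_structure_on_def
    using linear_complex_structure_of[OF linear_S] complex_structure_of_square[OF linear_S bc q]
      S_commute linear_S
    by (auto simp: complex_structure_of_def subspace_add subspace_scale linear_add linear_scale
        image_subset_iff subsetD)
qed

lemma minimal_invariant_complex_structures:
  assumes U: "minimal_invariant U"
    and J: "complex_structure_on U J" and K: "complex_structure_on U K"
    and JK: "\<And>x. x \<in> U \<Longrightarrow> K (J x) = J (K x)"
  shows "(\<forall>x\<in>U. K x = J x) \<or> (\<forall>x\<in>U. K x = - J x)"
proof -
  define D where "D x = K x - J x" for x
  have lin: "linear J" "linear K" using J K by (simp_all add: complex_structure_on_def)
  then have "linear D" unfolding D_def by (intro linear_compose_sub)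
  have D_commute: "D (S l x) = S l (D x)" if "x \<in> U" for l x
    using J K that linear_S[of l] by (simp add: D_def complex_structure_on_def linear_diff)
  show ?thesis
  proof (cases "\<exists>w\<in>U. w \<noteq> 0 \<and> D w = 0")
    case True
    then have "\<forall>x\<in>U. D x = 0"
      using minimal_invariant_kernel[OF U \<open>linear D\<close> D_commute] by blast
    then show ?thesis by (simp add: D_def)
  next
    case False
    have "K x = - J x" if x: "x \<in> U" for x
    proof -
      have sU: "subspace U" using U by (simp add: minimal_invariant_def invariant_def)
      have "K x + J x \<in> U" using J K x sU by (auto simp: complex_structure_on_def intro: subspace_add)
      moreover have "D (K x + J x) = 0"
        using J K JK[OF x] x lin by (simp add: D_def complex_structure_on_def linear_add)
      ultimately have "K x + J x = 0" using False by blast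
      then show ?thesis by (simp add: eq_neg_iff_add_eq_0)
    qed
    then show ?thesis by blast
  qed
qed

lemma minimal_invariant_common_eigenvector_or_quadratic:
  assumes U: "minimal_invariant U"
  obtains w where "common_eigenvector w"
  | i b c where "b^2 < 4*c" "\<forall>x\<in>U. poly_op [:c, b, 1:] (S i) x = 0"
proof (cases "\<forall>i. \<exists>z. \<forall>x\<in>U. S i x = z *\<^sub>R x")
  case True
  have "U \<subseteq> A" "U \<noteq> {0}" "subspace U" using U by (auto simp: minimal_invariant_def invariant_def)
  then obtain u where "u \<in> U" "u \<noteq> 0" using subspace_0 by blast
  with True \<open>U \<subseteq> A\<close> have "common_eigenvector u" by (fastforce simp: common_eigenvector_def)
  then show thesis by (rule that(1))
next
  case False
  then show thesis using minimal_invariant_scalar_or_quadratic[OF U] that(2) by blast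
qed

lemma minimal_invariant_op_in_span_complex_structure:
  assumes U: "minimal_invariant U" and J: "complex_structure_on U J"
  shows "\<exists>\<alpha> \<beta>. \<forall>x\<in>U. S j x = \<alpha> *\<^sub>R x + \<beta> *\<^sub>R J x"
  using minimal_invariant_scalar_or_quadratic[OF U, of j]
proof (elim disjE exE conjE)
  fix z assume "\<forall>x\<in>U. S j x = z *\<^sub>R x"
  then show ?thesis by (metis add.right_neutral scale_zero_left)
next
  fix b c assume bc: "b^2 < 4*c" and q: "\<forall>x\<in>U. poly_op [:c, b, 1:] (S j) x = 0"
  define K where "K = complex_structure_of (S j) b c"
  have "invariant U" using U by (simp add: minimal_invariant_def)
  then have K: "complex_structure_on U K"
    unfolding K_def using complex_structure_on_complex_structure_of bc q by blast
  have "K (J x) = J (K x)" if "x \<in> U" for x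
    using J that by (simp add: K_def complex_structure_of_def complex_structure_on_def
        linear_add linear_scale)
  then consider "\<forall>x\<in>U. K x = J x" | "\<forall>x\<in>U. K x = - J x"
    using minimal_invariant_complex_structures[OF U J K] by blast
  then show ?thesis
  proof cases
    case 1
    then have "\<forall>x\<in>U. S j x = (- b/2) *\<^sub>R x + sqrt (c - b^2/4) *\<^sub>R J x"
      using op_eq_complex_structure_of[OF bc, of "S j"] by (simp add: K_def)
    then show ?thesis by blast
  next
    case 2
    then have "\<forall>x\<in>U. S j x = (- b/2) *\<^sub>R x + (- sqrt (c - b^2/4)) *\<^sub>R J x"
      using op_eq_complex_structure_of[OF bc, of "S j"] by (simp add: K_def)
    then show ?thesis by blast
  qed
qed

lemma common_eigenvector_or_rotation_pair:
  assumes "A \<noteq> {0}"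
  shows "(\<exists>w. common_eigenvector w) \<or> (\<exists>u v. rotation_pair u v)"
proof -
  obtain U where U: "minimal_invariant U" using minimal_invariant_exists[OF assms] ..
  then have "invariant U" "U \<subseteq> A" "U \<noteq> {0}" "subspace U"
    by (auto simp: minimal_invariant_def invariant_def)
  then obtain u where u: "u \<in> U" "u \<noteq> 0" using subspace_0 by blast
  show ?thesis
  proof (cases rule: minimal_invariant_common_eigenvector_or_quadratic[OF U])
    case 1
    then show ?thesis by blast
  next
    case (2 i b c)
    note bc = 2(1) and q = 2(2)
    define J where "J = complex_structure_of (S i) b c"
    have J: "complex_structure_on U J"
      unfolding J_def using complex_structure_on_complex_structure_of \<open>invariant U\<close> bc q by blast
    then have Ju: "J u \<in> U" "J (J u) = - u" "linear J"
      using u by (auto simp: complex_structure_on_def)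
    have "\<exists>\<alpha> \<beta>. S j u = \<alpha> *\<^sub>R u + \<beta> *\<^sub>R J u \<and> S j (J u) = \<alpha> *\<^sub>R J u - \<beta> *\<^sub>R u" for j
    proof -
      obtain \<alpha> \<beta> where "\<forall>x\<in>U. S j x = \<alpha> *\<^sub>R x + \<beta> *\<^sub>R J x"
        using minimal_invariant_op_in_span_complex_structure[OF U J] by blast
      moreover have "S j (J u) = J (S j u)" using J u by (simp add: complex_structure_on_def)
      ultimately show ?thesis using u Ju by (auto simp: linear_add linear_scale)
    qed
    then have "rotation_pair u (J u)"
      using u Ju \<open>U \<subseteq> A\<close> independent_pair_complex_structure[OF Ju(3,2) u(2)]
      by (auto simp: rotation_pair_def)
    then show ?thesis by blast
  qed
qed

lemma invariant_image:
  assumes D: "linear D" "D ` A \<subseteq> A" and D_commute: "\<And>l x. x \<in> A \<Longrightarrow> D (S l x) = S l (D x)"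
  shows "invariant (D ` A)"
  unfolding invariant_def
proof (intro conjI allI)
  show "subspace (D ` A)" by (rule linear_subspace_image[OF D(1) subspace_A])
  show "S l ` D ` A \<subseteq> D ` A" for l
    using D_commute S_A by (auto simp flip: D_commute simp: image_subset_iff)
qed (use D in auto)

lemma common_eigenvector_in_line:
  assumes V: "invariant V" "V \<noteq> {0}" "dim V \<le> 1"
  shows "\<exists>w. common_eigenvector w"
proof -
  have sV: "subspace V" using V by (simp add: invariant_def)
  then obtain w where w: "w \<in> V" "w \<noteq> 0" using V subspace_0 by blast
  have "span {w} = V"
    using w V sV by (intro subspace_dim_equal) (auto simp: span_minimal)
  moreover have "S i w \<in> V" for i using V w by (auto simp: invariant_def)
  ultimately have "\<exists>l. S i w = l *\<^sub>R w" for i by (metis span_singleton rangeE)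
  then have "common_eigenvector w"
    using w V by (auto simp: common_eigenvector_def invariant_def)
  then show ?thesis ..
qed

lemma no_quadratic_relation_in_dim_3:
  assumes bc: "b^2 < 4*c" and q: "\<forall>x\<in>A. poly_op [:c, b, 1:] (S i) x = 0"
  shows "dim A \<noteq> 3"
proof (rule no_complex_structure_in_dim_3[OF subspace_A])
  let ?J = "complex_structure_of (S i) b c"
  show "linear ?J" by (rule linear_complex_structure_of[OF linear_S])
  show "?J ` A \<subseteq> A"
    using S_A subspace_A
    by (auto simp: complex_structure_of_def intro!: subspace_scale subspace_add)
  show "?J (?J x) = - x" if "x \<in> A" for x
    using q that by (simp add: complex_structure_of_square[OF linear_S bc])
qed

lemma common_eigenvector_if_dim_3:
  assumes dim_A: "dim A = 3"
  shows "\<exists>w. common_eigenvector w"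
proof -
  obtain U where U: "minimal_invariant U" using minimal_invariant_exists dim_A by force
  then have "invariant U" "U \<subseteq> A" "subspace U" "U \<noteq> {0}"
    by (auto simp: minimal_invariant_def invariant_def)
  then obtain u where u: "u \<in> U" "u \<noteq> 0" using subspace_0 by blast
  show ?thesis
  proof (cases rule: minimal_invariant_common_eigenvector_or_quadratic[OF U])
    case 1
    then show ?thesis by blast
  next
    case (2 i b c)
    note bc = 2(1) and q = 2(2)
    define D where "D = poly_op [:c, b, 1:] (S i)"
    have D: "linear D" "D ` A \<subseteq> A"
      using linear_poly_op[OF linear_S] poly_op_in_subspace[OF linear_S subspace_A S_A]
      by (auto simp: D_def)
    have D_commute: "D (S l x) = S l (D x)" if "x \<in> A" for l x
      using S_commute that
      by (auto simp: D_def intro!: poly_op_commute[OF linear_S linear_S subspace_A S_A, symmetric])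
    have "\<not> (\<forall>x\<in>A. D x = 0)"
      using no_quadratic_relation_in_dim_3[OF bc] dim_A by (auto simp: D_def)
    moreover let ?J = "complex_structure_of (S i) b c"
    have "complex_structure_on U ?J"
      using complex_structure_on_complex_structure_of \<open>invariant U\<close> bc q by blast
    then have "2 \<le> dim {x\<in>A. D x = 0}"
      using u q \<open>U \<subseteq> A\<close>
      by (intro complex_structure_dim_ge_2[of ?J u]) (auto simp: complex_structure_on_def D_def)
    then have "dim (D ` A) \<le> 1"
      using dim_kernel_add_dim_image[OF D(1) subspace_A] dim_A by linarith
    ultimately show ?thesis
      using common_eigenvector_in_line invariant_image[OF D D_commute] by auto
  qed
qed

end

section \<open>Coadjoint orbits\<close>

definition coadj_stabilizer ::
    "(real^'n \<Rightarrow> real^'n \<Rightarrow> real^'n) \<Rightarrow> (real^'n \<Rightarrow> real) \<Rightarrow> (real^'n) set" where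
  "coadj_stabilizer br F = {x. \<forall>y. F (br y x) = 0}"

definition form_vector ::
    "(real^'n \<Rightarrow> real^'n \<Rightarrow> real^'n) \<Rightarrow> (real^'n \<Rightarrow> real) \<Rightarrow> real^'n \<Rightarrow> real^'n" where
  "form_vector br F x = (\<chi> i. F (br (axis i 1) x))"

context
  fixes br :: "real^'n \<Rightarrow> real^'n \<Rightarrow> real^'n" and F :: "real^'n \<Rightarrow> real"
  assumes br: "bilinear br" and F: "linear F"
begin

lemma linear_form_vector: "linear (form_vector br F)"
  using br F unfolding form_vector_def bilinear_def
  by (intro linearI) (simp_all add: vec_eq_iff linear_add linear_scale)

lemma inner_form_vector: "form_vector br F x \<bullet> y = F (br y x)"
proof -
  have "linear (\<lambda>y. F (br y x))"
    by (intro linearI) (simp_all add: bilinear_ladd[OF br] bilinear_lmul[OF br] linear_add[OF F]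
        linear_scale[OF F])
  moreover have "form_vector br F x \<bullet> b = F (br b x)" if "b \<in> Basis" for b
    using that by (auto simp: Basis_vec_def form_vector_def inner_axis)
  ultimately have "(\<lambda>y. form_vector br F x \<bullet> y) = (\<lambda>y. F (br y x))"
    by (intro linear_eq_stdbasis) (simp_all add: bounded_linear.linear[OF bounded_linear_inner_right])
  then show ?thesis by metis
qed

lemma form_vector_eq_0_iff: "form_vector br F x = 0 \<longleftrightarrow> x \<in> coadj_stabilizer br F"
proof
  assume "x \<in> coadj_stabilizer br F"
  then have "form_vector br F x \<bullet> form_vector br F x = 0"
    by (simp add: inner_form_vector coadj_stabilizer_def)
  then show "form_vector br F x = 0" by simp
qed (simp add: coadj_stabilizer_def flip: inner_form_vector)

lemma dim_coadj_stabilizer_add_coadj_orbit_dim: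
  "dim (coadj_stabilizer br F) + coadj_orbit_dim br F = CARD('n)"
proof -
  have "(\<chi> i j. F (br (axis i 1) (axis j 1))) = matrix (form_vector br F)"
    by (simp add: matrix_def form_vector_def)
  then have "coadj_orbit_dim br F = dim (range ((*v) (matrix (form_vector br F))))"
    by (simp add: coadj_orbit_dim_def rank_dim_range)
  then have "coadj_orbit_dim br F = dim (range (form_vector br F))"
    by (simp only: matrix_vector_mul(2)[OF linear_form_vector])
  then show ?thesis
    using dim_kernel_add_dim_image[OF linear_form_vector subspace_UNIV]
    by (simp add: form_vector_eq_0_iff)
qed

lemma isotropic_subspace_dim:
  assumes P: "subspace P" and iso: "\<And>x y. x \<in> P \<Longrightarrow> y \<in> P \<Longrightarrow> F (br y x) = 0"
  shows "2 * dim P \<le> CARD('n) + dim (coadj_stabilizer br F)"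
proof -
  let ?O = "{y. \<forall>x\<in>P. orthogonal x y}"
  have "form_vector br F ` P \<subseteq> ?O"
    using iso by (auto simp: orthogonal_def inner_commute[of _ "form_vector br F _"] inner_form_vector)
  then have "dim (form_vector br F ` P) \<le> dim ?O" by (rule dim_subset)
  moreover have "dim ?O + dim P = CARD('n)"
    using dim_subspace_orthogonal_to_vectors[OF P subspace_UNIV] by simp
  moreover have "dim {x\<in>P. form_vector br F x = 0} \<le> dim (coadj_stabilizer br F)"
    by (intro dim_subset) (auto simp: form_vector_eq_0_iff)
  ultimately show ?thesis
    using dim_kernel_add_dim_image[OF linear_form_vector P] by linarith
qed

end

section \<open>One-step solvable MD algebras\<close>

locale one_step_solvable_algebra =
  fixes br :: "real^'n \<Rightarrow> real^'n \<Rightarrow> real^'n"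
  assumes one_step: "one_step_solvable br"
begin

abbreviation G1 :: "(real^'n) set" where "G1 \<equiv> derived br UNIV"

lemma bilinear: "bilinear br"
  and bracket_self: "br x x = 0"
  and jacobi: "br x (br y z) + br y (br z x) + br z (br x y) = 0"
  using one_step unfolding one_step_solvable_def lie_algebra_def by blast+

lemma subspace_G1: "subspace G1"
  by (simp add: derived_def)

lemma bracket_in_G1: "br x y \<in> G1"
  unfolding derived_def by (rule span_base) blast

lemma G1_abelian: "a \<in> G1 \<Longrightarrow> b \<in> G1 \<Longrightarrow> br a b = 0"
  and G1_nonzero: "G1 \<noteq> {0}"
  using one_step unfolding one_step_solvable_def by blast+

lemma bracket_antisym: "br y x = - br x y"
proof -
  have "br (x + y) (x + y) = br x x + br x y + br y x + br y y"
    by (simp add: bilinear_ladd[OF bilinear] bilinear_radd[OF bilinear] algebra_simps)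
  then show ?thesis by (simp add: bracket_self eq_neg_iff_add_eq_0 add.commute)
qed

lemma ad_commute_on_G1:
  assumes "a \<in> G1"
  shows "br x (br y a) = br y (br x a)"
  using jacobi[of x y a] G1_abelian[OF assms bracket_in_G1] bracket_antisym[of a x]
    bilinear_rneg[OF bilinear] by (simp add: eq_neg_iff_add_eq_0)

lemma G1_eqI:
  assumes "p \<in> G1" "q \<in> G1" "\<And>a. a \<in> G1 \<Longrightarrow> p \<bullet> a = q \<bullet> a"
  shows "p = q"
proof -
  have "(p - q) \<bullet> (p - q) = 0"
    using assms(3)[of "p - q"] subspace_diff[OF subspace_G1 assms(1,2)] by (simp add: inner_diff_left)
  then show ?thesis by simp
qed

text \<open>
  coad x is the transpose of ad x on G1 with respect to the inner product; through
  w \<mapsto> \<langle>w, -\<rangle> it is the coadjoint action on functionals restricted to G1.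
\<close>
definition coad :: "real^'n \<Rightarrow> real^'n \<Rightarrow> real^'n" where
  "coad x w = (SOME p. p \<in> G1 \<and> (\<forall>a\<in>G1. p \<bullet> a = w \<bullet> br x a))"

lemma coad_exists: "\<exists>p. p \<in> G1 \<and> (\<forall>a\<in>G1. p \<bullet> a = w \<bullet> br x a)"
proof -
  obtain p z where p: "p \<in> span G1" and z: "\<And>a. a \<in> span G1 \<Longrightarrow> orthogonal z a"
    and pz: "adjoint (br x) w = p + z"
    using orthogonal_subspace_decomp_exists by metis
  have "p \<bullet> a = w \<bullet> br x a" if "a \<in> G1" for a
  proof -
    have "p \<bullet> a = adjoint (br x) w \<bullet> a"
      using z[of a] that by (simp add: pz inner_add_left orthogonal_def span_base)
    also have "\<dots> = w \<bullet> br x a"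
      using bilinear by (simp add: adjoint_clauses bilinear_def)
    finally show ?thesis .
  qed
  moreover have "p \<in> G1" using p by (simp only: span_eq_iff[THEN iffD2, OF subspace_G1])
  ultimately show ?thesis by blast
qed

lemma coad_in_G1: "coad x w \<in> G1"
  and inner_coad: "a \<in> G1 \<Longrightarrow> coad x w \<bullet> a = w \<bullet> br x a"
  using someI_ex[OF coad_exists[of w x]] by (simp_all add: coad_def)

lemma coad_eqI: "p \<in> G1 \<Longrightarrow> (\<And>a. a \<in> G1 \<Longrightarrow> p \<bullet> a = w \<bullet> br x a) \<Longrightarrow> coad x w = p"
  by (rule G1_eqI[OF coad_in_G1]) (simp_all add: inner_coad)

lemma linear_coad: "linear (coad x)"
  by (intro linearI coad_eqI)
    (simp_all add: subspace_add subspace_scale subspace_G1 coad_in_G1 inner_add_left inner_coad)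

lemma linear_coad_left: "linear (\<lambda>x. coad x w)"
  by (intro linearI coad_eqI)
    (simp_all add: subspace_add subspace_scale subspace_G1 coad_in_G1 inner_add_left inner_coad
      bilinear_ladd[OF bilinear] bilinear_lmul[OF bilinear] inner_add_right)

lemma coad_commute: "coad x (coad y w) = coad y (coad x w)"
  by (rule G1_eqI[OF coad_in_G1 coad_in_G1])
    (simp add: inner_coad bracket_in_G1 ad_commute_on_G1)

sublocale coad: commuting_family coad G1
  by (rule commuting_family.intro[OF subspace_G1 linear_coad]) (auto simp: coad_in_G1 coad_commute)

lemma coad_kernel_isotropic:
  assumes "coad x w = 0" "coad y w = 0"
  shows "coad z w \<bullet> br y x = 0"
proof -
  have "coad z w \<bullet> br y x = w \<bullet> br z (br y x)" by (simp add: inner_coad bracket_in_G1)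
  also have "br z (br y x) = - br y (br x z) - br x (br z y)"
    using jacobi[of z y x] by (simp add: algebra_simps eq_neg_iff_add_eq_0)
  then have "w \<bullet> br z (br y x) = - (w \<bullet> br y (br x z)) - w \<bullet> br x (br z y)"
    by (simp add: inner_diff_right)
  also have "\<dots> = - (coad y w \<bullet> br x z) - coad x w \<bullet> br z y" by (simp add: inner_coad bracket_in_G1)
  finally show ?thesis using assms by simp
qed

lemma dim_coad_kernel_add_dim_image:
  "dim {x. coad x w = 0} + dim (range (\<lambda>x. coad x w)) = CARD('n)"
  using dim_kernel_add_dim_image[OF linear_coad_left subspace_UNIV] by simp

lemma dim_G1_le_stabilizer_add_coad_image:
  assumes "w \<in> G1"
  shows "dim G1 \<le> dim (coadj_stabilizer br (\<lambda>z. w \<bullet> z)) + dim (range (\<lambda>x. coad x w))"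
proof -
  let ?R = "range (\<lambda>x. coad x w)"
  let ?N = "{a\<in>G1. \<forall>r\<in>?R. orthogonal r a}"
  have "dim ?N + dim ?R = dim G1"
    using linear_subspace_image[OF linear_coad_left subspace_UNIV] subspace_G1 coad_in_G1
    by (intro dim_subspace_orthogonal_to_vectors) auto
  moreover have "?N \<subseteq> coadj_stabilizer br (\<lambda>z. w \<bullet> z)"
    by (auto simp: coadj_stabilizer_def orthogonal_def simp flip: inner_coad)
  then have "dim ?N \<le> dim (coadj_stabilizer br (\<lambda>z. w \<bullet> z))" by (rule dim_subset)
  ultimately show ?thesis by linarith
qed

end

locale one_step_MD_algebra =
  one_step_solvable_algebra br for br :: "real^'n \<Rightarrow> real^'n \<Rightarrow> real^'n" +
  assumes MD: "MD_algebra (CARD('n) - 2) br" and two_le_card: "2 \<le> CARD('n)"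
begin

lemma dim_coadj_stabilizer_eq_2:
  assumes "w \<in> G1" "w \<noteq> 0"
  shows "dim (coadj_stabilizer br (\<lambda>z. w \<bullet> z)) = 2"
proof -
  have "linear (\<lambda>z. w \<bullet> z)" by (simp add: bounded_linear.linear bounded_linear_inner_right)
  moreover have "w \<bullet> w \<noteq> 0" using assms by simp
  ultimately have "coadj_orbit_dim br (\<lambda>z. w \<bullet> z) = CARD('n) - 2"
    using MD assms unfolding MD_algebra_def by blast
  then show ?thesis
    using dim_coadj_stabilizer_add_coadj_orbit_dim[OF bilinear \<open>linear _\<close>] two_le_card by simp
qed

lemma isotropic_coad_kernel_dim:
  assumes w: "w \<in> G1" "w \<noteq> 0"
    and iso: "\<And>x y. coad x w = 0 \<Longrightarrow> coad y w = 0 \<Longrightarrow> w \<bullet> br y x = 0"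
  shows "2 * dim {x. coad x w = 0} \<le> CARD('n) + 2"
proof -
  have "linear (\<lambda>z. w \<bullet> z)" by (simp add: bounded_linear.linear bounded_linear_inner_right)
  from isotropic_subspace_dim[OF bilinear this linear_subspace_kernel[OF linear_coad_left]] iso
  show ?thesis using dim_coadj_stabilizer_eq_2[OF w] by simp
qed

lemma coad_image_nonzero:
  assumes "3 \<le> dim G1" "w \<in> G1" "w \<noteq> 0"
  obtains x where "coad x w \<noteq> 0"
proof -
  have "\<not> (\<forall>x. coad x w = 0)"
  proof
    assume "\<forall>x. coad x w = 0"
    then have "range (\<lambda>x. coad x w) = {0}" by auto
    then show False
      using dim_G1_le_stabilizer_add_coad_image[of w] dim_coadj_stabilizer_eq_2[of w] assms by simp
  qed
  then show ?thesis using that by blast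
qed

lemma no_common_eigenvector:
  assumes "3 \<le> dim G1" "5 \<le> CARD('n)"
  shows "\<not> coad.common_eigenvector w"
proof
  assume "coad.common_eigenvector w"
  then have w: "w \<in> G1" "w \<noteq> 0" and eigen: "\<And>x. \<exists>l. coad x w = l *\<^sub>R w"
    by (auto simp: coad.common_eigenvector_def)
  obtain x0 where x0: "coad x0 w \<noteq> 0" using coad_image_nonzero assms(1) w by blast
  obtain l where l: "coad x0 w = l *\<^sub>R w" using eigen by blast
  with x0 have "l \<noteq> 0" by auto
  have "w \<bullet> br y x = 0" if "coad x w = 0" "coad y w = 0" for x y
    using coad_kernel_isotropic[OF that, of x0] l \<open>l \<noteq> 0\<close> by simp
  then have "2 * dim {x. coad x w = 0} \<le> CARD('n) + 2" using isotropic_coad_kernel_dim w by blast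
  moreover have "range (\<lambda>x. coad x w) \<subseteq> span {w}"
    using eigen by (auto simp: span_singleton)
  then have "dim (range (\<lambda>x. coad x w)) \<le> 1" using dim_le_card[of _ "{w}"] by simp
  ultimately show False using dim_coad_kernel_add_dim_image[of w] assms(2) by linarith
qed

lemma rotation_pair_coad_image_dim:
  assumes "coad.rotation_pair u v"
  shows "dim (range (\<lambda>x. coad x u)) \<le> 2"
proof -
  have "coad x u \<in> span {u, v}" for x
    using assms by (metis coad.rotation_pair_def insertCI span_add span_base span_scale)
  then have "range (\<lambda>x. coad x u) \<subseteq> span {u, v}" by blast
  then show ?thesis using dim_subset dim_span_pair_le_2 order_trans by blast
qed

lemma rotation_pair_kernel_isotropic:
  assumes "3 \<le> dim G1" and "coad.rotation_pair u v"
    and xy: "coad x u = 0" "coad y u = 0"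
  shows "u \<bullet> br y x = 0"
proof -
  from assms(2) have uv: "u \<in> G1" "independent_pair u v"
    and rot: "\<And>x. \<exists>\<alpha> \<beta>. coad x u = \<alpha> *\<^sub>R u + \<beta> *\<^sub>R v \<and> coad x v = \<alpha> *\<^sub>R v - \<beta> *\<^sub>R u"
    by (auto simp: coad.rotation_pair_def)
  have "u \<noteq> 0" using independent_pair_nonzero[OF uv(2)] .
  have kernel_v: "coad x v = 0" if "coad x u = 0" for x
  proof -
    obtain \<alpha> \<beta> where ab: "coad x u = \<alpha> *\<^sub>R u + \<beta> *\<^sub>R v" "coad x v = \<alpha> *\<^sub>R v - \<beta> *\<^sub>R u"
      using rot by blast
    then have "\<alpha> = 0 \<and> \<beta> = 0" using that uv(2) by (simp add: independent_pair_def)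
    then show ?thesis using ab by simp
  qed
  obtain x0 where x0: "coad x0 u \<noteq> 0" using coad_image_nonzero assms(1) uv(1) \<open>u \<noteq> 0\<close> by blast
  obtain \<alpha> \<beta> where ab: "coad x0 u = \<alpha> *\<^sub>R u + \<beta> *\<^sub>R v" "coad x0 v = \<alpha> *\<^sub>R v - \<beta> *\<^sub>R u"
    using rot by blast
  with x0 have "\<alpha>*\<alpha> + \<beta>*\<beta> \<noteq> 0" by (auto simp: add_nonneg_eq_0_iff)
  have "\<alpha> * (u \<bullet> br y x) + \<beta> * (v \<bullet> br y x) = 0"
    using coad_kernel_isotropic[OF xy, of x0] by (simp add: ab inner_add_left)
  moreover have "\<alpha> * (v \<bullet> br y x) - \<beta> * (u \<bullet> br y x) = 0"
    using coad_kernel_isotropic[OF kernel_v[OF xy(1)] kernel_v[OF xy(2)], of x0]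
    by (simp add: ab inner_diff_left)
  ultimately have "(\<alpha>*\<alpha> + \<beta>*\<beta>) * (u \<bullet> br y x) = 0" by algebra
  with \<open>\<alpha>*\<alpha> + \<beta>*\<beta> \<noteq> 0\<close> show ?thesis using mult_eq_0_iff by blast
qed

lemma rotation_pair_dims:
  assumes "3 \<le> dim G1" and uv: "coad.rotation_pair u v"
  shows "CARD('n) \<le> 6 \<and> dim G1 \<le> 4"
proof -
  have u: "u \<in> G1" "u \<noteq> 0"
    using uv independent_pair_nonzero by (auto simp: coad.rotation_pair_def)
  have "2 * dim {x. coad x u = 0} \<le> CARD('n) + 2"
    using isotropic_coad_kernel_dim[OF u] rotation_pair_kernel_isotropic[OF assms] by blast
  then have "CARD('n) \<le> 6"
    using dim_coad_kernel_add_dim_image[of u] rotation_pair_coad_image_dim[OF uv] by linarith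
  moreover have "dim G1 \<le> 4"
    using dim_G1_le_stabilizer_add_coad_image[OF u(1)] dim_coadj_stabilizer_eq_2[OF u]
      rotation_pair_coad_image_dim[OF uv] by linarith
  ultimately show ?thesis ..
qed

end

theorem mainTheorem2:
  fixes br :: "real^'n \<Rightarrow> real^'n \<Rightarrow> real^'n"
  assumes "one_step_solvable br"
    and "MD_algebra (CARD('n) - 2) br"
    and "CARD('n) \<ge> 6"
    and "dim (derived br UNIV) \<ge> 3"
  shows "CARD('n) = 6 \<and> dim (derived br UNIV) = 4"
proof -
  interpret one_step_MD_algebra br
    using assms by unfold_locales auto
  have no_eigen: "\<not> coad.common_eigenvector w" for w
    using no_common_eigenvector assms(3,4) by simp
  then obtain u v where "coad.rotation_pair u v"
    using coad.common_eigenvector_or_rotation_pair G1_nonzero by blast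
  then have "CARD('n) \<le> 6 \<and> dim G1 \<le> 4" using rotation_pair_dims assms(4) by blast
  moreover have "dim G1 \<noteq> 3" using coad.common_eigenvector_if_dim_3 no_eigen by blast
  ultimately show ?thesis using assms(3,4) by simp
qed

end
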